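(* Let $X$ be a complex Banach space, $\mathcal{F}$ a commutative algebra with unit, $\Phi:\mathcal{F}\to\mathcal{C}(X)$ a calculus, and $f\in\mathcal{F}$. If $\mathcal{E}\subseteq\mathrm{reg}(f,\Phi)$ is a $\Phi$-anchor set, then $\mathcal{E}$ determines $\Phi$ at $f$, i.e., for all $x,y\in X$: $\Phi(f)x=y$ if and only if $\Phi(ef)x=\Phi(e)y$ for all $e\in\mathcal{E}$.
   Context: $\mathcal{L}(X)$, $\mathcal{C}(X)$: bounded, resp. closed linear operators on $X$; operator inclusions are graph inclusions, sums/products have natural domains, and "$Tx=y$" means $x\in\mathrm{dom}(T)$ and $Tx=y$. A proto-calculus is a map $\Phi:\mathcal{F}\to\mathcal{C}(X)$ ($\mathcal{F}$ a unital algebra) with (FC1) $\Phi(\mathbf{1})=I$; (FC2) $\lambda\Phi(f)\subseteq\Phi(\lambda f)$, $\Phi(f)+\Phi(g)\subseteq\Phi(f+g)$; (FC3) $\Phi(f)\Phi(g)\subseteq\Phi(fg)$ with $\mathrm{dom}(\Phi(f)\Phi(g))=\mathrm{dom}(\Phi(g))\cap\mathrm{dom}(\Phi(fg))$. Let $\mathrm{bdd}(\mathcal{F},\Phi)=\{f:\Phi(f)\in\mathcal{L}(X)\}$ and for $f\in\mathcal{F}$, $\mathrm{reg}(f,\Phi)=\{e\in\mathcal{F}: e,\ ef\in\mathrm{bdd}(\mathcal{F},\Phi)\}$. A subset $\mathcal{M}\subseteq\mathrm{bdd}(\mathcal{F},\Phi)$ determines $\Phi$ at $f$ if for all $x,y\in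 X$: $\Phi(f)x=y\iff\Phi(ef)x=\Phi(e)y$ for all $e\in\mathcal{M}\cap\mathrm{reg}(f,\Phi)$. A proto-calculus is a calculus if (FC4) $\mathrm{bdd}(\mathcal{F},\Phi)$ determines $\Phi$ at every $f\in\mathcal{F}$. A nonempty subset $\mathcal{M}\subseteq\mathrm{bdd}(\mathcal{F},\Phi)$ is a $\Phi$-anchor set if $\bigcap_{e\in\mathcal{M}}\ker\Phi(e)=\{0\}$. *)

theory Defs
  imports "HOL-Analysis.Analysis"
begin

class cvector = ab_group_add +
  fixes scaleC :: "complex \<Rightarrow> 'a \<Rightarrow> 'a"
  assumes scaleC_add_right: "scaleC a (x + y) = scaleC a x + scaleC a y"
    and scaleC_add_left: "scaleC (a + b) x = scaleC a x + scaleC b x"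
    and scaleC_scaleC: "scaleC a (scaleC b x) = scaleC (a * b) x"
    and scaleC_one: "scaleC 1 x = x"

class comm_calgebra_1 = cvector + comm_ring_1 +
  assumes scaleC_mult_left: "scaleC a x * y = scaleC a (x * y)"

class cbanach = cvector + banach +
  assumes scaleR_scaleC: "scaleR r x = scaleC (complex_of_real r) x"
    and norm_scaleC: "norm (scaleC a x) = cmod a * norm x"

text \<open>A (possibly unbounded) operator on X is represented by its graph
  T :: ('a \<times> 'a) set; "T x = y" means (x, y) \<in> T.  Operator inclusion is graph
  inclusion.\<close>

definition lin_op :: "('a::cvector \<times> 'a) set \<Rightarrow> bool" where
  "lin_op T \<longleftrightarrow> (0, 0) \<in> T
     \<and> (\<forall>x y u v. (x, y) \<in> T \<longrightarrow> (u, v) \<in> T \<longrightarrow> (x + u, y + v) \<in> T)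
     \<and> (\<forall>c x y. (x, y) \<in> T \<longrightarrow> (scaleC c x, scaleC c y) \<in> T)
     \<and> (\<forall>x y z. (x, y) \<in> T \<longrightarrow> (x, z) \<in> T \<longrightarrow> y = z)"

definition closed_op :: "('a::cbanach \<times> 'a) set \<Rightarrow> bool" where
  "closed_op T \<longleftrightarrow> lin_op T \<and> closed T"

definition bounded_op :: "('a::cbanach \<times> 'a) set \<Rightarrow> bool" where
  "bounded_op T \<longleftrightarrow> lin_op T \<and> Domain T = UNIV
     \<and> (\<exists>C. \<forall>x y. (x, y) \<in> T \<longrightarrow> norm y \<le> C * norm x)"

definition op_scale :: "complex \<Rightarrow> ('a::cvector \<times> 'a) set \<Rightarrow> ('a \<times> 'a) set" where
  "op_scale c T = {(x, scaleC c y) | x y. (x, y) \<in> T}"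

definition op_add :: "('a::cvector \<times> 'a) set \<Rightarrow> ('a \<times> 'a) set \<Rightarrow> ('a \<times> 'a) set" where
  "op_add T S = {(x, y + z) | x y z. (x, y) \<in> T \<and> (x, z) \<in> S}"

text \<open>Product T S (apply S first), with natural domain.\<close>
definition op_mult :: "('a \<times> 'a) set \<Rightarrow> ('a \<times> 'a) set \<Rightarrow> ('a \<times> 'a) set" where
  "op_mult T S = {(x, z) | x y z. (x, y) \<in> S \<and> (y, z) \<in> T}"

definition op_ker :: "('a::cvector \<times> 'a) set \<Rightarrow> 'a set" where
  "op_ker T = {x. (x, 0) \<in> T}"

definition proto_calculus :: "('f::comm_calgebra_1 \<Rightarrow> ('a::cbanach \<times> 'a) set) \<Rightarrow> bool" where
  "proto_calculus \<Phi> \<longleftrightarrow>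
     (\<forall>f. closed_op (\<Phi> f))
     \<and> \<Phi> 1 = Id
     \<and> (\<forall>c f. op_scale c (\<Phi> f) \<subseteq> \<Phi> (scaleC c f))
     \<and> (\<forall>f g. op_add (\<Phi> f) (\<Phi> g) \<subseteq> \<Phi> (f + g))
     \<and> (\<forall>f g. op_mult (\<Phi> f) (\<Phi> g) \<subseteq> \<Phi> (f * g)
              \<and> Domain (op_mult (\<Phi> f) (\<Phi> g)) = Domain (\<Phi> g) \<inter> Domain (\<Phi> (f * g)))"

definition bdd :: "('f::comm_calgebra_1 \<Rightarrow> ('a::cbanach \<times> 'a) set) \<Rightarrow> 'f set" where
  "bdd \<Phi> = {f. bounded_op (\<Phi> f)}"

definition reg :: "'f::comm_calgebra_1 \<Rightarrow> ('f \<Rightarrow> ('a::cbanach \<times> 'a) set) \<Rightarrow> 'f set" where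
  "reg f \<Phi> = {e. e \<in> bdd \<Phi> \<and> e * f \<in> bdd \<Phi>}"

definition determines :: "'f set \<Rightarrow> ('f::comm_calgebra_1 \<Rightarrow> ('a::cbanach \<times> 'a) set) \<Rightarrow> 'f \<Rightarrow> bool" where
  "determines M \<Phi> f \<longleftrightarrow> M \<subseteq> bdd \<Phi> \<and>
     (\<forall>x y. (x, y) \<in> \<Phi> f \<longleftrightarrow>
        (\<forall>e \<in> M \<inter> reg f \<Phi>. \<exists>w. (x, w) \<in> \<Phi> (e * f) \<and> (y, w) \<in> \<Phi> e))"

definition calculus :: "('f::comm_calgebra_1 \<Rightarrow> ('a::cbanach \<times> 'a) set) \<Rightarrow> bool" where
  "calculus \<Phi> \<longleftrightarrow> proto_calculus \<Phi> \<and> (\<forall>f. determines (bdd \<Phi>) \<Phi> f)"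

definition anchor_set :: "'f set \<Rightarrow> ('f::comm_calgebra_1 \<Rightarrow> ('a::cbanach \<times> 'a) set) \<Rightarrow> bool" where
  "anchor_set M \<Phi> \<longleftrightarrow> M \<noteq> {} \<and> M \<subseteq> bdd \<Phi> \<and> (\<Inter>e\<in>M. op_ker (\<Phi> e)) = {0}"

end

theory Submission
  imports Defs
begin

text \<open>If \<Phi>(ef)x = \<Phi>(e)y for all e in the anchor set E and g is any regulariser of f,
  put a = \<Phi>(gf)x and b = \<Phi>(g)y. Multiplicativity and commutativity of the algebra give
  \<Phi>(e)a = \<Phi>(egf)x = \<Phi>(g)\<Phi>(ef)x = \<Phi>(g)\<Phi>(e)y = \<Phi>(eg)y = \<Phi>(e)b for every e \<in> E, so a - b
  lies in the common kernel of the \<Phi>(e) and hence vanishes. Thus \<Phi>(gf)x = \<Phi>(g)y for all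
  bounded g regularising f, and axiom (FC4) yields \<Phi>(f)x = y.\<close>

lemma scaleC_zero_left [simp]: "scaleC 0 (x::'a::cvector) = 0"
proof -
  have "scaleC (0 + 0) x = scaleC 0 x + scaleC 0 x" by (rule scaleC_add_left)
  then show ?thesis by simp
qed

lemma scaleC_minus_one: "scaleC (-1) (x::'a::cvector) = - x"
proof -
  have "scaleC (1 + -1) x = scaleC 1 x + scaleC (-1) x" by (rule scaleC_add_left)
  then have "x + scaleC (-1) x = 0" by (simp add: scaleC_one)
  then show ?thesis by (simp add: eq_neg_iff_add_eq_0 add.commute)
qed

lemma lin_op_single_valued: "lin_op T \<Longrightarrow> (x, y) \<in> T \<Longrightarrow> (x, z) \<in> T \<Longrightarrow> y = z"
  unfolding lin_op_def by simp

lemma lin_op_diff_in_ker: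
  assumes "lin_op T" "(a, u) \<in> T" "(b, u) \<in> T"
  shows "a - b \<in> op_ker T"
proof -
  have "(scaleC (-1) b, scaleC (-1) u) \<in> T" using assms(1,3) unfolding lin_op_def by simp
  then have "(- b, - u) \<in> T" by (simp add: scaleC_minus_one)
  then have "(a + - b, u + - u) \<in> T" using assms(1,2) unfolding lin_op_def by blast
  then show ?thesis unfolding op_ker_def by simp
qed

lemma bounded_op_total: "bounded_op T \<Longrightarrow> \<exists>y. (x, y) \<in> T"
  unfolding bounded_op_def by blast

lemma bdd_total: "g \<in> bdd \<Phi> \<Longrightarrow> \<exists>y. (x, y) \<in> \<Phi> g"
  unfolding bdd_def by (simp add: bounded_op_total)

lemma proto_calculus_lin_op: "proto_calculus \<Phi> \<Longrightarrow> lin_op (\<Phi> f)"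
  unfolding proto_calculus_def closed_op_def by simp

lemma proto_calculus_comp:
  assumes "proto_calculus \<Phi>" "(x, y) \<in> \<Phi> g" "(y, z) \<in> \<Phi> f"
  shows "(x, z) \<in> \<Phi> (f * g)"
proof -
  have "(x, z) \<in> op_mult (\<Phi> f) (\<Phi> g)" using assms(2,3) unfolding op_mult_def by blast
  then show ?thesis using assms(1) unfolding proto_calculus_def by blast
qed

lemma proto_calculus_regularise:
  assumes "proto_calculus \<Phi>" "e \<in> bdd \<Phi>" "(x, y) \<in> \<Phi> f"
  shows "\<exists>w. (x, w) \<in> \<Phi> (e * f) \<and> (y, w) \<in> \<Phi> e"
proof -
  obtain w where "(y, w) \<in> \<Phi> e" using assms(2) bdd_total by blast
  with proto_calculus_comp[OF assms(1,3)] show ?thesis by blast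
qed

lemma proto_calculus_regularised_agree:
  assumes pc: "proto_calculus \<Phi>" and "e \<in> bdd \<Phi>" "g \<in> bdd \<Phi>"
    and xw: "(x, w) \<in> \<Phi> (e * f)" and yw: "(y, w) \<in> \<Phi> e"
    and xa: "(x, a) \<in> \<Phi> (g * f)" and yb: "(y, b) \<in> \<Phi> g"
  shows "\<exists>u. (a, u) \<in> \<Phi> e \<and> (b, u) \<in> \<Phi> e"
proof -
  obtain u where au: "(a, u) \<in> \<Phi> e" using \<open>e \<in> bdd \<Phi>\<close> bdd_total by blast
  obtain v where bv: "(b, v) \<in> \<Phi> e" using \<open>e \<in> bdd \<Phi>\<close> bdd_total by blast
  obtain z where wz: "(w, z) \<in> \<Phi> g" using \<open>g \<in> bdd \<Phi>\<close> bdd_total by blast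
  have "(x, u) \<in> \<Phi> (g * (e * f))" and "(y, z) \<in> \<Phi> (e * g)"
    using proto_calculus_comp[OF pc xa au] proto_calculus_comp[OF pc yw wz]
    by (simp_all add: ac_simps)
  then have "u = z" and "v = z"
    using proto_calculus_comp[OF pc xw wz] proto_calculus_comp[OF pc yb bv]
      lin_op_single_valued[OF proto_calculus_lin_op[OF pc]] by blast+
  then show ?thesis using au bv by blast
qed

lemma anchor_set_eqI:
  assumes "anchor_set E \<Phi>" "\<And>e. lin_op (\<Phi> e)"
    and "\<forall>e\<in>E. \<exists>u. (a, u) \<in> \<Phi> e \<and> (b, u) \<in> \<Phi> e"
  shows "a = b"
proof -
  have "a - b \<in> (\<Inter>e\<in>E. op_ker (\<Phi> e))" using assms(2,3) lin_op_diff_in_ker by blast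
  then show ?thesis using assms(1) unfolding anchor_set_def by simp
qed

lemma anchor_set_regularised_extend:
  assumes pc: "proto_calculus \<Phi>" and E: "anchor_set E \<Phi>" "E \<subseteq> reg f \<Phi>"
    and agree: "\<forall>e\<in>E. \<exists>w. (x, w) \<in> \<Phi> (e * f) \<and> (y, w) \<in> \<Phi> e"
    and g: "g \<in> reg f \<Phi>"
  shows "\<exists>w. (x, w) \<in> \<Phi> (g * f) \<and> (y, w) \<in> \<Phi> g"
proof -
  have gb: "g \<in> bdd \<Phi>" and gfb: "g * f \<in> bdd \<Phi>" using g unfolding reg_def by auto
  obtain a where xa: "(x, a) \<in> \<Phi> (g * f)" using gfb bdd_total by blast
  obtain b where yb: "(y, b) \<in> \<Phi> g" using gb bdd_total by blast
  have "\<forall>e\<in>E. \<exists>u. (a, u) \<in> \<Phi> e \<and> (b, u) \<in> \<Phi> e"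
  proof
    fix e assume "e \<in> E"
    then have "e \<in> bdd \<Phi>" using E(2) unfolding reg_def by auto
    then show "\<exists>u. (a, u) \<in> \<Phi> e \<and> (b, u) \<in> \<Phi> e"
      using agree \<open>e \<in> E\<close> proto_calculus_regularised_agree[OF pc _ gb _ _ xa yb] by blast
  qed
  then have "a = b" using anchor_set_eqI[OF E(1) proto_calculus_lin_op[OF pc]] by blast
  then show ?thesis using xa yb by blast
qed

lemma anchor_set_determines:
  assumes pc: "proto_calculus \<Phi>" and det: "determines (bdd \<Phi>) \<Phi> f"
    and E: "E \<subseteq> reg f \<Phi>" "anchor_set E \<Phi>"
  shows "determines E \<Phi> f"
proof -
  have Eb: "E \<subseteq> bdd \<Phi>" using E(1) unfolding reg_def by auto
  have "(x, y) \<in> \<Phi> f \<longleftrightarrow> (\<forall>e \<in> E \<inter> reg f \<Phi>. \<exists>w. (x, w) \<in> \<Phi> (e * f) \<and> (y, w) \<in> \<Phi> e)"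
    for x y
  proof
    assume "(x, y) \<in> \<Phi> f"
    then show "\<forall>e \<in> E \<inter> reg f \<Phi>. \<exists>w. (x, w) \<in> \<Phi> (e * f) \<and> (y, w) \<in> \<Phi> e"
      using proto_calculus_regularise[OF pc] Eb by blast
  next
    assume "\<forall>e \<in> E \<inter> reg f \<Phi>. \<exists>w. (x, w) \<in> \<Phi> (e * f) \<and> (y, w) \<in> \<Phi> e"
    then have "\<forall>e \<in> E. \<exists>w. (x, w) \<in> \<Phi> (e * f) \<and> (y, w) \<in> \<Phi> e" using E(1) by blast
    then have "\<forall>g \<in> bdd \<Phi> \<inter> reg f \<Phi>. \<exists>w. (x, w) \<in> \<Phi> (g * f) \<and> (y, w) \<in> \<Phi> g"
      using anchor_set_regularised_extend[OF pc E(2,1)] by blast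
    then show "(x, y) \<in> \<Phi> f" using det unfolding determines_def by blast
  qed
  then show ?thesis unfolding determines_def using Eb by blast
qed

theorem theorem4p1:
  fixes \<Phi> :: "'f::comm_calgebra_1 \<Rightarrow> ('a::cbanach \<times> 'a) set"
    and f :: 'f and E :: "'f set"
  assumes "calculus \<Phi>"
    and "E \<subseteq> reg f \<Phi>"
    and "anchor_set E \<Phi>"
  shows "determines E \<Phi> f"
  using assms anchor_set_determines unfolding calculus_def by blast

end
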